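(* Let $\ell\ge 3$ be an integer and let $G$ be a finite graph containing no cycle of length $\ell$ as a subgraph. Then \[ t(G)\le \frac{1}{3}(\ell-3)\,e(G), \] where $e(G)$ is the number of edges of $G$.
   Context: All graphs are simple. $t(G)$ denotes the number of triangles ($K_3$ subgraphs) in $G$. *)

theory Defs
  imports Complex_Main
begin

definition simple_graph :: "'a set \<Rightarrow> 'a set set \<Rightarrow> bool" where
  "simple_graph V E \<longleftrightarrow> finite V \<and> (\<forall>e\<in>E. e \<subseteq> V \<and> card e = 2)"

definition has_cycle :: "'a set \<Rightarrow> 'a set set \<Rightarrow> nat \<Rightarrow> bool" where
  "has_cycle V E l \<longleftrightarrow> (\<exists>v :: nat \<Rightarrow> 'a.
      inj_on v {..<l} \<and> v ` {..<l} \<subseteq> V \<and>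
      (\<forall>i<l. {v i, v (Suc i mod l)} \<in> E))"

definition triangles :: "'a set \<Rightarrow> 'a set set \<Rightarrow> 'a set set" where
  "triangles V E = {T. T \<subseteq> V \<and> card T = 3 \<and> (\<forall>x\<in>T. \<forall>y\<in>T. x \<noteq> y \<longrightarrow> {x, y} \<in> E)}"

end

theory Submission
  imports Defs
begin

text \<open>By the Erdos-Gallai theorem for paths, a graph on n vertices without a path on k
  vertices has at most (k - 2) n / 2 edges. A path on l - 1 vertices inside the neighbourhood
  N(v) closes through v into a cycle of length l, so N(v) spans at most (l - 3) deg(v) / 2 edges.
  Summing over v, the edges inside the neighbourhoods count every triangle three times and the
  degrees count every edge twice.\<close>

definition edges_within :: "'a set set \<Rightarrow> 'a set \<Rightarrow> 'a set set" where
  "edges_within E W = {e\<in>E. e \<subseteq> W}"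

definition neighbours :: "'a set \<Rightarrow> 'a set set \<Rightarrow> 'a \<Rightarrow> 'a set" where
  "neighbours W E v = {u\<in>W. {v, u} \<in> E}"

definition is_path :: "'a set set \<Rightarrow> 'a list \<Rightarrow> bool" where
  "is_path E xs \<longleftrightarrow> distinct xs \<and> successively (\<lambda>x y. {x, y} \<in> E) xs"

lemma loop_not_edge: "\<forall>e\<in>E. card e = 2 \<Longrightarrow> {x, x} \<notin> E"
  by auto

lemma edge_through_vertex:
  assumes "card e = 2" "w \<in> e"
  obtains u where "u \<noteq> w" "e = {w, u}"
  using assms by (metis card_2_iff insert_commute insert_iff singletonD)

lemma successively_edge_rev:
  "successively (\<lambda>x y. {x, y} \<in> E) (rev xs) \<longleftrightarrow> successively (\<lambda>x y. {x, y} \<in> E) xs"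
  by (simp add: insert_commute)

lemma finite_edges_within: "finite W \<Longrightarrow> finite (edges_within E W)"
  by (rule finite_subset[of _ "Pow W"]) (auto simp: edges_within_def)

lemma card_edges_within_containing:
  assumes E2: "\<forall>e\<in>E. card e = 2" and "w \<in> W"
  shows "card {e \<in> edges_within E W. w \<in> e} = card (neighbours W E w)"
proof -
  have "{e \<in> edges_within E W. w \<in> e} = (\<lambda>u. {w, u}) ` neighbours W E w"
  proof (intro equalityI subsetI)
    fix e assume e: "e \<in> {e \<in> edges_within E W. w \<in> e}"
    with E2 obtain u where "e = {w, u}"
      by (metis (no_types, lifting) edge_through_vertex edges_within_def mem_Collect_eq)
    with e show "e \<in> (\<lambda>u. {w, u}) ` neighbours W E w"
      by (auto simp: edges_within_def neighbours_def)
  qed (use \<open>w \<in> W\<close> in \<open>auto simp: edges_within_def neighbours_def\<close>)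
  moreover have "inj_on (\<lambda>u. {w, u}) (neighbours W E w)"
    using loop_not_edge[OF E2] by (auto simp: inj_on_def doubleton_eq_iff neighbours_def)
  ultimately show ?thesis
    by (simp add: card_image)
qed

lemma card_edges_within_Diff_vertex:
  assumes E2: "\<forall>e\<in>E. card e = 2" and "finite W" "w \<in> W"
  shows "card (edges_within E W) = card (edges_within E (W - {w})) + card (neighbours W E w)"
proof -
  have "edges_within E W = edges_within E (W - {w}) \<union> {e \<in> edges_within E W. w \<in> e}"
    by (auto simp: edges_within_def)
  moreover have "edges_within E (W - {w}) \<inter> {e \<in> edges_within E W. w \<in> e} = {}"
    by (auto simp: edges_within_def)
  ultimately show ?thesis
    using card_edges_within_containing[OF assms(1,3)] finite_edges_within[OF \<open>finite W\<close>]
    by (metis (no_types, lifting) card_Un_disjoint finite_Un)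
qed

lemma card_edges_within_split:
  assumes E2: "\<forall>e\<in>E. card e = 2" and "finite W" "S \<subseteq> W"
    and no_cross: "\<forall>y\<in>W - S. \<forall>z\<in>S. {y, z} \<notin> E"
  shows "card (edges_within E W) = card (edges_within E S) + card (edges_within E (W - S))"
proof -
  have "edges_within E W = edges_within E S \<union> edges_within E (W - S)"
  proof (intro equalityI subsetI)
    fix e assume e: "e \<in> edges_within E W"
    with E2 obtain a b where ab: "e = {a, b}" "e \<in> E" "e \<subseteq> W"
      by (auto simp: edges_within_def card_2_iff)
    with no_cross have "a \<in> S \<longleftrightarrow> b \<in> S"
      by (metis DiffI insert_commute insert_subset)
    with ab show "e \<in> edges_within E S \<union> edges_within E (W - S)"
      by (auto simp: edges_within_def)
  qed (use \<open>S \<subseteq> W\<close> in \<open>auto simp: edges_within_def\<close>)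
  moreover have "edges_within E S \<inter> edges_within E (W - S) = {}"
  proof -
    have "{} \<notin> E"
      using E2 by force
    moreover have "e = {}" if "e \<subseteq> S" "e \<subseteq> W - S" for e :: "'a set"
      using that by blast
    ultimately show ?thesis
      unfolding edges_within_def by blast
  qed
  ultimately show ?thesis
    using assms(2,3) by (simp add: card_Un_disjoint finite_edges_within finite_subset)
qed

lemma card_edges_within_le:
  assumes E2: "\<forall>e\<in>E. card e = 2" and "finite S"
  shows "2 * card (edges_within E S) \<le> card S * (card S - 1)"
proof -
  have "card (edges_within E S) \<le> card {B. B \<subseteq> S \<and> card B = 2}"
    using E2 assms(2) by (intro card_mono) (auto simp: edges_within_def)
  also have "\<dots> = card S choose 2"
    using n_subsets[OF \<open>finite S\<close>] by simp
  finally show ?thesis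
    by (simp add: choose_two)
qed

lemma is_path_take: "is_path E xs \<Longrightarrow> is_path E (take n xs)"
  using successively_append_iff[of _ "take n xs" "drop n xs"] by (simp add: is_path_def)

lemma path_endpoint_crossing:
  assumes E2: "\<forall>e\<in>E. card e = 2" and "P \<noteq> []"
    and deg: "length P \<le> card (neighbours (set P) E (hd P)) + card (neighbours (set P) E (last P))"
  obtains i where "Suc i < length P" "{hd P, P ! Suc i} \<in> E" "{last P, P ! i} \<in> E"
proof -
  define m where "m = length P - 1"
  have lenP: "length P = Suc m"
    using \<open>P \<noteq> []\<close> by (simp add: m_def)
  define IA where "IA = {i. i < m \<and> {hd P, P ! Suc i} \<in> E}"
  define IB where "IB = {i. i < m \<and> {last P, P ! i} \<in> E}"
  have "neighbours (set P) E (hd P) \<subseteq> (\<lambda>i. P ! Suc i) ` IA"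
  proof
    fix u assume u: "u \<in> neighbours (set P) E (hd P)"
    then obtain j where j: "j < length P" "u = P ! j"
      by (auto simp: neighbours_def in_set_conv_nth)
    moreover have "j \<noteq> 0"
    proof
      assume "j = 0"
      then have "{hd P, hd P} \<in> E"
        using u j \<open>P \<noteq> []\<close> by (simp add: neighbours_def hd_conv_nth)
      then show False
        using loop_not_edge[OF E2] by blast
    qed
    ultimately show "u \<in> (\<lambda>i. P ! Suc i) ` IA"
      using u lenP by (auto simp: IA_def neighbours_def gr0_conv_Suc)
  qed
  then have A: "card (neighbours (set P) E (hd P)) \<le> card IA"
    by (rule surj_card_le[rotated]) (simp add: IA_def)
  have "neighbours (set P) E (last P) \<subseteq> (\<lambda>i. P ! i) ` IB"
  proof
    fix u assume u: "u \<in> neighbours (set P) E (last P)"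
    then obtain j where j: "j < length P" "u = P ! j"
      by (auto simp: neighbours_def in_set_conv_nth)
    moreover have "j \<noteq> m"
      using u j \<open>P \<noteq> []\<close> loop_not_edge[OF E2] by (auto simp: neighbours_def last_conv_nth m_def)
    ultimately show "u \<in> (\<lambda>i. P ! i) ` IB"
      using u lenP by (auto simp: IB_def neighbours_def)
  qed
  then have B: "card (neighbours (set P) E (last P)) \<le> card IB"
    by (rule surj_card_le[rotated]) (simp add: IB_def)
  have "IA \<inter> IB \<noteq> {}"
  proof
    assume "IA \<inter> IB = {}"
    then have "card IA + card IB = card (IA \<union> IB)"
      by (simp add: card_Un_disjoint IA_def IB_def)
    also have "\<dots> \<le> m"
      using card_mono[of "{..<m}" "IA \<union> IB"] by (auto simp: IA_def IB_def)
    finally show False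
      using A B deg lenP by linarith
  qed
  then show ?thesis
    using that lenP by (auto simp: IA_def IB_def)
qed

lemma path_closes_at_crossing:
  assumes P: "is_path E P" and i: "Suc i < length P" "{hd P, P ! Suc i} \<in> E" "{last P, P ! i} \<in> E"
  defines "C \<equiv> take (Suc i) P @ rev (drop (Suc i) P)"
  shows "is_path E C" "set C = set P" "{last C, hd C} \<in> E"
proof -
  have drop_ne: "drop (Suc i) P \<noteq> []"
    using i by simp
  show "set C = set P"
    unfolding C_def by (metis append_take_drop_id set_append set_rev)
  have "distinct C"
    using P unfolding C_def is_path_def by (metis append_take_drop_id distinct_append distinct_rev set_rev)
  moreover have "successively (\<lambda>x y. {x, y} \<in> E) C"
  proof -
    have "successively (\<lambda>x y. {x, y} \<in> E) (take (Suc i) P)"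
      "successively (\<lambda>x y. {x, y} \<in> E) (drop (Suc i) P)"
      using P successively_append_iff[of _ "take (Suc i) P" "drop (Suc i) P"]
      by (simp_all add: is_path_def)
    moreover have "last (take (Suc i) P) = P ! i"
      using i by (subst last_conv_nth) auto
    ultimately show ?thesis
      using i drop_ne unfolding C_def
      by (simp add: successively_append_iff hd_rev successively_edge_rev insert_commute)
  qed
  ultimately show "is_path E C"
    by (simp add: is_path_def)
  show "{last C, hd C} \<in> E"
    using i drop_ne unfolding C_def by (cases P) (simp_all add: last_rev hd_drop_conv_nth insert_commute)
qed

text \<open>Ore's closing argument: if the degrees of the two endpoints within the path add up to its
  length, some P ! Suc i is adjacent to hd P while P ! i is adjacent to last P, and reversing the
  tail after position i closes P.\<close>

lemma path_closes_to_cycle: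
  assumes E2: "\<forall>e\<in>E. card e = 2" and P: "is_path E P" "P \<noteq> []"
    and deg: "length P \<le> card (neighbours (set P) E (hd P)) + card (neighbours (set P) E (last P))"
  obtains C where "is_path E C" "set C = set P" "{last C, hd C} \<in> E"
proof -
  obtain i where "Suc i < length P" "{hd P, P ! Suc i} \<in> E" "{last P, P ! i} \<in> E"
    using path_endpoint_crossing[OF E2 P(2) deg] .
  then show ?thesis
    using path_closes_at_crossing[OF P(1)] that by blast
qed

lemma cycle_rotate_to:
  assumes C: "is_path E C" "{last C, hd C} \<in> E" and "z \<in> set C"
  obtains R where "is_path E R" "set R = set C" "length R = length C" "hd R = z"
proof -
  obtain j where j: "j < length C" "C ! j = z"
    using \<open>z \<in> set C\<close> by (auto simp: in_set_conv_nth)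
  define R where "R = rotate j C"
  have R_eq: "R = drop j C @ take j C"
    using j by (simp add: R_def rotate_drop_take)
  have "successively (\<lambda>x y. {x, y} \<in> E) R"
  proof -
    have "successively (\<lambda>x y. {x, y} \<in> E) (take j C)"
      "successively (\<lambda>x y. {x, y} \<in> E) (drop j C)"
      using C(1) successively_append_iff[of _ "take j C" "drop j C"] by (simp_all add: is_path_def)
    moreover have "take j C \<noteq> [] \<Longrightarrow> {last (drop j C), hd (take j C)} \<in> E"
      using C(2) j by simp
    ultimately show ?thesis
      unfolding R_eq successively_append_iff by blast
  qed
  moreover have "hd R = z"
    using j hd_rotate_conv_nth[of C j] by (force simp: R_def)
  ultimately show ?thesis
    using C(1) by (intro that[of R]) (simp_all add: R_def is_path_def)
qed

lemma longest_path_no_exit: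
  assumes E2: "\<forall>e\<in>E. card e = 2"
    and P: "is_path E P" "set P \<subseteq> W" "P \<noteq> []"
    and longest: "\<And>xs. is_path E xs \<Longrightarrow> set xs \<subseteq> W \<Longrightarrow> length xs \<le> length P"
    and deg: "length P \<le> card (neighbours W E (hd P)) + card (neighbours W E (last P))"
    and y: "y \<in> W - set P" and z: "z \<in> set P"
  shows "{y, z} \<notin> E"
proof
  assume yz: "{y, z} \<in> E"
  have hd_nbrs: "neighbours W E (hd P) = neighbours (set P) E (hd P)"
  proof -
    have "u \<in> set P" if "u \<in> W" "{hd P, u} \<in> E" for u
    proof (rule ccontr)
      assume "u \<notin> set P"
      with that P have "is_path E (u # P)"
        by (auto simp: is_path_def successively_Cons insert_commute)
      then show False
        using longest[of "u # P"] that P(2) by simp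
    qed
    then show ?thesis
      using P(2) by (auto simp: neighbours_def)
  qed
  have last_nbrs: "neighbours W E (last P) = neighbours (set P) E (last P)"
  proof -
    have "u \<in> set P" if "u \<in> W" "{last P, u} \<in> E" for u
    proof (rule ccontr)
      assume "u \<notin> set P"
      with that P have "is_path E (P @ [u])"
        by (auto simp: is_path_def successively_append_iff)
      then show False
        using longest[of "P @ [u]"] that P(2) by simp
    qed
    then show ?thesis
      using P(2) by (auto simp: neighbours_def)
  qed
  obtain C where C: "is_path E C" "set C = set P" "{last C, hd C} \<in> E"
    by (rule path_closes_to_cycle[OF E2 P(1,3)]) (use deg hd_nbrs last_nbrs in simp)
  have "length C = length P"
    using C P(1) by (metis distinct_card is_path_def)
  obtain R where R: "is_path E R" "set R = set P" "length R = length P" "hd R = z"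
  proof (rule cycle_rotate_to[OF C(1,3)])
    show "z \<in> set C"
      using z C(2) by simp
  qed (use C \<open>length C = length P\<close> in simp)
  have "is_path E (y # R)"
    using R y yz z by (auto simp: is_path_def successively_Cons)
  moreover have "set (y # R) \<subseteq> W"
    using R(2) y P(2) by auto
  ultimately show False
    using longest[of "y # R"] R(3) by simp
qed

lemma separated_set_if_min_degree:
  assumes E2: "\<forall>e\<in>E. card e = 2" and "W \<noteq> {}"
    and no_path: "\<And>xs. is_path E xs \<Longrightarrow> set xs \<subseteq> W \<Longrightarrow> length xs < k"
    and high: "\<And>w. w \<in> W \<Longrightarrow> k - 1 \<le> 2 * card (neighbours W E w)"
  obtains S where "S \<subseteq> W" "S \<noteq> {}" "card S < k" "\<forall>y\<in>W - S. \<forall>z\<in>S. {y, z} \<notin> E"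
proof -
  obtain w0 where "w0 \<in> W"
    using \<open>W \<noteq> {}\<close> by blast
  have "\<exists>P. (is_path E P \<and> set P \<subseteq> W) \<and>
      (\<forall>xs. is_path E xs \<and> set xs \<subseteq> W \<longrightarrow> length xs \<le> length P)"
    by (rule ex_has_greatest_nat[of _ "[w0]" _ k])
      (use \<open>w0 \<in> W\<close> no_path in \<open>auto simp: is_path_def\<close>)
  then obtain P where P: "is_path E P" "set P \<subseteq> W"
    and longest: "\<And>xs. is_path E xs \<Longrightarrow> set xs \<subseteq> W \<Longrightarrow> length xs \<le> length P"
    by blast
  have "P \<noteq> []"
    using longest[of "[w0]"] \<open>w0 \<in> W\<close> by (auto simp: is_path_def)
  have "card (set P) < k"
    using no_path[OF P] P(1) by (simp add: is_path_def distinct_card)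
  moreover have "hd P \<in> W" "last P \<in> W"
    using P \<open>P \<noteq> []\<close> by auto
  then have "length P \<le> card (neighbours W E (hd P)) + card (neighbours W E (last P))"
    using high[of "hd P"] high[of "last P"] no_path[OF P] by linarith
  then have "\<forall>y\<in>W - set P. \<forall>z\<in>set P. {y, z} \<notin> E"
    using longest_path_no_exit[OF E2 P \<open>P \<noteq> []\<close> longest] by blast
  ultimately show ?thesis
    using P(2) \<open>P \<noteq> []\<close> by (intro that[of "set P"]) auto
qed

text \<open>Induction on W: delete a vertex of degree at most (k - 2) / 2 if there is one; otherwise
  split off the vertex set of a longest path, which has fewer than k vertices and no edge to the
  rest of W.\<close>

theorem erdos_gallai_path:
  assumes E2: "\<forall>e\<in>E. card e = 2" and "finite W"
    and no_path: "\<And>xs. is_path E xs \<Longrightarrow> set xs \<subseteq> W \<Longrightarrow> length xs < k"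
  shows "2 * card (edges_within E W) \<le> (k - 2) * card W"
  using assms(2,3)
proof (induction W rule: finite_psubset_induct)
  case (psubset W)
  show ?case
  proof (cases "\<exists>w\<in>W. 2 * card (neighbours W E w) \<le> k - 2")
    case True
    then obtain w where w: "w \<in> W" "2 * card (neighbours W E w) \<le> k - 2"
      by blast
    have "2 * card (edges_within E (W - {w})) \<le> (k - 2) * card (W - {w})"
      using w psubset.prems by (intro psubset.IH) auto
    moreover have "card W = Suc (card (W - {w}))"
      using card_Suc_Diff1[OF psubset.hyps w(1)] by simp
    ultimately show ?thesis
      using card_edges_within_Diff_vertex[OF E2 psubset.hyps w(1)] w(2) by simp
  next
    case False
    then have high: "k - 1 \<le> 2 * card (neighbours W E w)" if "w \<in> W" for w
      using that by force
    show ?thesis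
    proof (cases "W = {}")
      case True
      then show ?thesis
        using E2 by (auto simp: edges_within_def)
    next
      case False
      obtain S where S: "S \<subseteq> W" "S \<noteq> {}" "card S < k"
        and no_cross: "\<forall>y\<in>W - S. \<forall>z\<in>S. {y, z} \<notin> E"
        using separated_set_if_min_degree[OF E2 False psubset.prems high] by blast
      have "2 * card (edges_within E S) \<le> card S * (card S - 1)"
        using card_edges_within_le[OF E2 finite_subset[OF S(1) psubset.hyps]] .
      also have "\<dots> \<le> (k - 2) * card S"
      proof -
        have "card S - 1 \<le> k - 2"
          using S(3) by linarith
        then show ?thesis
          by (simp add: mult.commute)
      qed
      finally have "2 * card (edges_within E S) \<le> (k - 2) * card S" .
      moreover have "2 * card (edges_within E (W - S)) \<le> (k - 2) * card (W - S)"
        using S(1,2) psubset.prems by (intro psubset.IH) auto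
      moreover have "card W = card S + card (W - S)"
        using S(1) psubset.hyps by (simp add: card_Diff_subset card_mono finite_subset)
      ultimately show ?thesis
        using card_edges_within_split[OF E2 psubset.hyps S(1) no_cross]
        by (simp add: algebra_simps)
    qed
  qed
qed

lemma has_cycle_if_closed_path:
  assumes ys: "is_path E ys" "set ys \<subseteq> V" "{last ys, hd ys} \<in> E"
  shows "has_cycle V E (length ys)"
  unfolding has_cycle_def
proof (intro exI conjI allI impI)
  show "inj_on ((!) ys) {..<length ys}"
    using ys(1) by (simp add: inj_on_nth is_path_def)
  show "(!) ys ` {..<length ys} \<subseteq> V"
    using ys(2) nth_mem by blast
next
  fix i assume i: "i < length ys"
  show "{ys ! i, ys ! (Suc i mod length ys)} \<in> E"
  proof (cases "Suc i < length ys")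
    case True
    then show ?thesis
      using ys(1) successively_nth[of "\<lambda>x y. {x, y} \<in> E" ys i] by (simp add: is_path_def)
  next
    case False
    then have "length ys = Suc i"
      using i by simp
    moreover have "ys \<noteq> []"
      using i by auto
    ultimately have "last ys = ys ! i" "hd ys = ys ! (Suc i mod length ys)"
      by (simp_all add: last_conv_nth hd_conv_nth)
    with ys(3) show ?thesis
      by simp
  qed
qed

lemma has_cycle_if_path_in_neighbours:
  assumes E2: "\<forall>e\<in>E. card e = 2" and "v \<in> V"
    and xs: "is_path E xs" "set xs \<subseteq> neighbours V E v" "xs \<noteq> []"
  shows "has_cycle V E (Suc (length xs))"
proof -
  have nbr: "{v, u} \<in> E" "u \<in> V" if "u \<in> set xs" for u
    using that xs(2) by (auto simp: neighbours_def)
  have "v \<notin> set xs"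
    using nbr(1) loop_not_edge[OF E2] by blast
  then have "is_path E (v # xs)"
    using xs(1,3) nbr(1)[of "hd xs"] by (simp add: is_path_def successively_Cons)
  moreover have "{last (v # xs), hd (v # xs)} \<in> E"
    using nbr(1)[of "last xs"] xs(3) by (simp add: insert_commute)
  ultimately show ?thesis
    using has_cycle_if_closed_path[of E "v # xs" V] nbr(2) \<open>v \<in> V\<close> by auto
qed

lemma card_triangles_containing:
  assumes E2: "\<forall>e\<in>E. card e = 2" and EV: "\<forall>e\<in>E. e \<subseteq> V" and "v \<in> V"
  shows "card {T \<in> triangles V E. v \<in> T} = card (edges_within E (neighbours V E v))"
proof -
  have "v \<notin> neighbours V E v"
    using loop_not_edge[OF E2] by (simp add: neighbours_def)
  then have inj: "inj_on (insert v) (edges_within E (neighbours V E v))"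
    by (intro inj_onI) (auto simp: edges_within_def insert_ident)
  have "insert v ` edges_within E (neighbours V E v) = {T \<in> triangles V E. v \<in> T}"
  proof (intro equalityI subsetI)
    fix T assume "T \<in> insert v ` edges_within E (neighbours V E v)"
    then obtain a b where ab: "{a, b} \<in> E" "a \<noteq> b" "{a, b} \<subseteq> neighbours V E v" "T = {v, a, b}"
      using E2 by (auto simp: edges_within_def card_2_iff)
    then have "a \<noteq> v" "b \<noteq> v"
      using \<open>v \<notin> neighbours V E v\<close> by auto
    with ab \<open>v \<in> V\<close> show "T \<in> {T \<in> triangles V E. v \<in> T}"
      by (auto simp: triangles_def neighbours_def insert_commute)
  next
    fix T assume T: "T \<in> {T \<in> triangles V E. v \<in> T}"
    then have "card (T - {v}) = 2"
      by (simp add: triangles_def)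
    then obtain a b where ab: "T - {v} = {a, b}" "a \<noteq> b"
      by (auto simp: card_2_iff)
    then have "T = insert v {a, b}"
      using T by blast
    moreover have "{a, b} \<in> edges_within E (neighbours V E v)"
      using T ab unfolding \<open>T = insert v {a, b}\<close>
      by (auto simp: triangles_def edges_within_def neighbours_def)
    ultimately show "T \<in> insert v ` edges_within E (neighbours V E v)"
      by blast
  qed
  with inj show ?thesis
    by (metis card_image)
qed

lemma sum_card_neighbours:
  assumes "simple_graph V E"
  shows "(\<Sum>v\<in>V. card (neighbours V E v)) = 2 * card E"
proof -
  have finV: "finite V" and EV: "\<forall>e\<in>E. e \<subseteq> V" and E2: "\<forall>e\<in>E. card e = 2"
    using assms by (auto simp: simple_graph_def)
  have "finite E"
    by (rule finite_subset[of _ "Pow V"]) (use EV finV in auto)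
  have "edges_within E V = E"
    using EV by (auto simp: edges_within_def)
  then have "(\<Sum>v\<in>V. card (neighbours V E v)) = (\<Sum>v\<in>V. card {e\<in>E. v \<in> e})"
    using card_edges_within_containing[OF E2, of _ V] by (intro sum.cong) auto
  also have "\<dots> = 2 * card E"
  proof (rule sum_multicount[OF finV \<open>finite E\<close>], intro ballI)
    fix e assume "e \<in> E"
    then have "{v\<in>V. v \<in> e} = e"
      using EV by auto
    with \<open>e \<in> E\<close> E2 show "card {v\<in>V. v \<in> e} = 2"
      by simp
  qed
  finally show ?thesis .
qed

lemma sum_card_neighbour_edges:
  assumes "simple_graph V E"
  shows "(\<Sum>v\<in>V. card (edges_within E (neighbours V E v))) = 3 * card (triangles V E)"
proof -
  have finV: "finite V" and EV: "\<forall>e\<in>E. e \<subseteq> V" and E2: "\<forall>e\<in>E. card e = 2"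
    using assms by (auto simp: simple_graph_def)
  have "finite (triangles V E)"
    by (rule finite_subset[of _ "Pow V"]) (auto simp: triangles_def finV)
  have "(\<Sum>v\<in>V. card (edges_within E (neighbours V E v))) = (\<Sum>v\<in>V. card {T \<in> triangles V E. v \<in> T})"
    by (rule sum.cong[OF refl], rule card_triangles_containing[OF E2 EV, symmetric])
  also have "\<dots> = 3 * card (triangles V E)"
  proof (rule sum_multicount[OF finV \<open>finite (triangles V E)\<close>], intro ballI)
    fix T assume "T \<in> triangles V E"
    then have "T \<subseteq> V" "card T = 3"
      by (simp_all add: triangles_def)
    then show "card {v\<in>V. v \<in> T} = 3"
      by (simp add: Collect_conj_eq Int_absorb1)
  qed
  finally show ?thesis .
qed

lemma card_neighbour_edges_le:
  assumes "simple_graph V E" "3 \<le> l" "\<not> has_cycle V E l" "v \<in> V"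
  shows "2 * card (edges_within E (neighbours V E v)) \<le> (l - 3) * card (neighbours V E v)"
proof -
  have E2: "\<forall>e\<in>E. card e = 2" and "finite V"
    using assms(1) by (auto simp: simple_graph_def)
  have "length xs < l - 1" if "is_path E xs" "set xs \<subseteq> neighbours V E v" for xs
  proof (rule ccontr)
    assume long: "\<not> length xs < l - 1"
    define ys where "ys = take (l - 1) xs"
    have "length ys = l - 1"
      using long by (simp add: ys_def)
    moreover have "has_cycle V E (Suc (length ys))"
    proof (rule has_cycle_if_path_in_neighbours[OF E2 assms(4)])
      show "is_path E ys" "set ys \<subseteq> neighbours V E v"
        using that set_take_subset[of "l - 1" xs] by (auto simp: ys_def is_path_take)
      show "ys \<noteq> []"
        using long assms(2) by (cases xs) (auto simp: ys_def)
    qed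
    ultimately show False
      using assms(2,3) by simp
  qed
  moreover have "finite (neighbours V E v)"
    using \<open>finite V\<close> by (simp add: neighbours_def)
  ultimately show ?thesis
    using erdos_gallai_path[OF E2, of "neighbours V E v" "l - 1"] by (simp add: numeral_3_eq_3)
qed

theorem lemma3p1:
  fixes V :: "'a set" and E :: "'a set set" and l :: nat
  assumes "simple_graph V E"
    and "l \<ge> 3"
    and "\<not> has_cycle V E l"
  shows "real (card (triangles V E)) \<le> (real l - 3) / 3 * real (card E)"
proof -
  have "2 * (3 * card (triangles V E)) = (\<Sum>v\<in>V. 2 * card (edges_within E (neighbours V E v)))"
    using sum_card_neighbour_edges[OF assms(1)] by (simp add: sum_distrib_left[symmetric])
  also have "\<dots> \<le> (\<Sum>v\<in>V. (l - 3) * card (neighbours V E v))"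
    using card_neighbour_edges_le[OF assms] by (rule sum_mono)
  also have "\<dots> = (l - 3) * (2 * card E)"
    using sum_card_neighbours[OF assms(1)] by (simp only: sum_distrib_left[symmetric])
  finally have "3 * card (triangles V E) \<le> (l - 3) * card E"
    by (simp add: mult.commute)
  then have "real (3 * card (triangles V E)) \<le> real ((l - 3) * card E)"
    by (simp only: of_nat_le_iff)
  then have "3 * real (card (triangles V E)) \<le> (real l - 3) * real (card E)"
    using assms(2) by (simp add: of_nat_diff)
  then show ?thesis
    by (simp add: field_simps)
qed

end
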